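(* Let $k,r\ge1$ be integers and let $m=\lceil r/2\rceil$. Then $$\psi_{(3,2^k,1^r)}=\begin{cases}\big[\psi_{(2^{m+k+1})}-h_2p_1^{r+1}\psi_{(2^k)}\big]+p_1^r(2h_3+e_3)\psi_{(2^k)}, & r\text{ odd},\\[2pt] p_1\big[\psi_{(2^{m+k+1})}-h_2p_1^{r}\psi_{(2^k)}\big]+p_1^r(2h_3+e_3)\psi_{(2^k)}, & r\text{ even}.\end{cases}$$
   Context: $p_i$, $h_i$, $e_i$ denote power sum, complete homogeneous and elementary symmetric functions, and $p_\lambda=\prod_i p_{\lambda_i}$. Reverse lexicographic order on partitions of $n$: for distinct $\lambda,\mu\vdash n$, $\lambda>\mu$ iff $\lambda_j>\mu_j$ at the first index $j$ where they differ; $(1^n)$ is minimal. For $\mu\vdash n$, $\psi_\mu=\sum_{\lambda\vdash n,\ (1^n)\le\lambda\le\mu}p_\lambda$. In particular $\psi_{(2^j)}=\sum_{i=0}^j p_2^ip_1^{2j-2i}$. *)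

theory Defs
  imports Complex_Main
begin

text \<open>Symmetric functions are represented by their evaluations at
  finitely many variables x 0, ..., x (N-1) (for arbitrary N and arbitrary
  real values); an identity in the ring of symmetric functions holds iff it
  holds for all such evaluations.\<close>

definition partitions :: "nat \<Rightarrow> nat list set" where
  "partitions n = {lam. sorted_wrt (\<ge>) lam \<and> (\<forall>a\<in>set lam. 0 < a) \<and> sum_list lam = n}"

definition rlex_le :: "nat list \<Rightarrow> nat list \<Rightarrow> bool" where
  "rlex_le lam mu \<longleftrightarrow> lam = mu \<or> (lam, mu) \<in> lexord {(a, b). a < b}"

definition psum :: "nat \<Rightarrow> (nat \<Rightarrow> real) \<Rightarrow> nat \<Rightarrow> real" where
  "psum N x i = (\<Sum>j<N. x j ^ i)"

definition psum_part :: "nat \<Rightarrow> (nat \<Rightarrow> real) \<Rightarrow> nat list \<Rightarrow> real" where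
  "psum_part N x lam = prod_list (map (psum N x) lam)"

definition hsym :: "nat \<Rightarrow> (nat \<Rightarrow> real) \<Rightarrow> nat \<Rightarrow> real" where
  "hsym N x d = (\<Sum>\<alpha>\<in>{\<alpha>::nat \<Rightarrow> nat. (\<forall>j. N \<le> j \<longrightarrow> \<alpha> j = 0) \<and> (\<Sum>j<N. \<alpha> j) = d}.
                    \<Prod>j<N. x j ^ \<alpha> j)"

definition esym :: "nat \<Rightarrow> (nat \<Rightarrow> real) \<Rightarrow> nat \<Rightarrow> real" where
  "esym N x d = (\<Sum>S\<in>{S. S \<subseteq> {..<N} \<and> card S = d}. \<Prod>j\<in>S. x j)"

definition psi :: "nat \<Rightarrow> (nat \<Rightarrow> real) \<Rightarrow> nat list \<Rightarrow> real" where
  "psi N x mu = (\<Sum>lam\<in>{lam \<in> partitions (sum_list mu).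
                     rlex_le (replicate (sum_list mu) 1) lam \<and> rlex_le lam mu}.
                   psum_part N x lam)"

end

theory Submission
  imports Defs
begin

text \<open>Let n = 2k + r + 3. In reverse lexicographic order, the partitions of n below
  (3, 2^k, 1^r) are those with all parts at most 2, which are exactly the partitions below
  (2^(n div 2), 1^(n mod 2)), together with the partitions 3 \<nu> with \<nu> below (2^k, 1^r).
  Since \<psi> of (2^j, 1^b) is p_1^b \<psi> of (2^j), this gives
  \<psi>(3, 2^k, 1^r) = p_1^(n mod 2) \<psi>(2^(n div 2)) + p_3 p_1^r \<psi>(2^k),
  and the claim follows from p_3 = 2 h_3 + e_3 - h_2 p_1, a consequence of Newton's identities
  in degree at most 3. The argument works equally for k = 0 or r = 0.\<close>

section \<open>Partitions in reverse lexicographic order\<close>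

lemma Nil_in_partitions_iff: "[] \<in> partitions n \<longleftrightarrow> n = 0"
  unfolding partitions_def by auto

lemma Cons_in_partitions_iff:
  "a # lam \<in> partitions n \<longleftrightarrow>
     0 < a \<and> (\<forall>b\<in>set lam. b \<le> a) \<and> a \<le> n \<and> lam \<in> partitions (n - a)"
  unfolding partitions_def by auto

lemma finite_partitions: "finite (partitions n)"
proof (rule finite_subset)
  have "length lam \<le> n" if "lam \<in> partitions n" for lam
  proof -
    have "length lam = sum_list (map (\<lambda>_. 1::nat) lam)"
      by (simp add: sum_list_triv)
    also have "\<dots> \<le> sum_list lam"
      using sum_list_mono[of lam "\<lambda>_. 1::nat" id] that by (auto simp: partitions_def Suc_leI)
    finally show ?thesis
      using that by (simp add: partitions_def)
  qed
  then show "partitions n \<subseteq> {lam. set lam \<subseteq> {..n} \<and> length lam \<le> n}"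
    by (auto simp: partitions_def member_le_sum_list)
qed (simp add: finite_lists_length_le)

lemma partition_parts_le_1:
  assumes "lam \<in> partitions n" and "\<forall>a\<in>set lam. a \<le> 1"
  shows "lam = replicate n 1"
  using assms
proof (induction lam arbitrary: n)
  case Nil
  then show ?case by (simp add: Nil_in_partitions_iff)
next
  case (Cons a lam)
  then have "a = 1"
    by (auto simp: Cons_in_partitions_iff)
  with Cons.prems have "lam \<in> partitions (n - 1)" and "1 \<le> n"
    by (simp_all add: Cons_in_partitions_iff)
  with Cons.IH Cons.prems(2) \<open>a = 1\<close> show ?case
    by (cases n) auto
qed

lemma rlex_le_Nil_right [simp]: "rlex_le lam [] \<longleftrightarrow> lam = []"
  by (simp add: rlex_le_def)

lemma rlex_le_Cons_Cons:
  "rlex_le (b # lam) (a # mu) \<longleftrightarrow> b < a \<or> b = a \<and> rlex_le lam mu"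
  by (auto simp: rlex_le_def)

lemma rlex_le_antisym: "rlex_le lam mu \<Longrightarrow> rlex_le mu lam \<Longrightarrow> lam = mu"
proof -
  have "asym {(a, b). (a::nat) < b}"
    by (auto intro: asymI)
  then show "rlex_le lam mu \<Longrightarrow> rlex_le mu lam \<Longrightarrow> lam = mu"
    unfolding rlex_le_def using lexord_asymmetric by blast
qed

lemma replicate_one_rlex_le:
  assumes "lam \<in> partitions n"
  shows "rlex_le (replicate n 1) lam"
proof (cases "\<forall>a\<in>set lam. a \<le> 1")
  case True
  then show ?thesis
    using partition_parts_le_1[OF assms] by (simp add: rlex_le_def)
next
  case False
  then obtain a lam' where lam: "lam = a # lam'"
    by (cases lam) auto
  with False assms have "1 < a" and "a \<le> n"
    by (auto simp: Cons_in_partitions_iff)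
  then show ?thesis
    unfolding lam by (cases n) (auto simp: rlex_le_Cons_Cons)
qed

lemma rlex_le_parts_le:
  assumes "rlex_le lam mu" and "sorted_wrt (\<ge>) lam" and "\<forall>c\<in>set mu. c \<le> a"
  shows "\<forall>b\<in>set lam. b \<le> a"
proof (cases lam)
  case (Cons b lam')
  with assms(1) obtain c mu' where mu: "mu = c # mu'"
    by (cases mu) auto
  with assms Cons have "b \<le> c" and "c \<le> a"
    by (auto simp: rlex_le_Cons_Cons)
  with assms(2) Cons show ?thesis
    by auto
qed simp

section \<open>The sums \<psi> over down-sets\<close>

lemma psi_altdef:
  "psi N x mu = (\<Sum>lam\<in>{lam \<in> partitions (sum_list mu). rlex_le lam mu}. psum_part N x lam)"
  unfolding psi_def by (intro sum.cong refl Collect_cong) (auto dest: replicate_one_rlex_le)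

lemma psi_Cons:
  assumes "a # mu \<in> partitions n"
  shows "psi N x (a # mu) =
    (\<Sum>lam\<in>{lam \<in> partitions n. \<forall>b\<in>set lam. b < a}. psum_part N x lam) + psum N x a * psi N x mu"
proof -
  have a: "0 < a" "a \<le> n" "\<forall>c\<in>set mu. c \<le> a" and mu: "mu \<in> partitions (n - a)"
    using assms by (auto simp: Cons_in_partitions_iff)
  have n: "sum_list (a # mu) = n" and mu_sum: "sum_list mu = n - a"
    using assms mu by (simp_all add: partitions_def)
  define Below where "Below = {lam \<in> partitions n. \<forall>b\<in>set lam. b < a}"
  define Down where "Down = {nu \<in> partitions (n - a). rlex_le nu mu}"
  have split: "{lam \<in> partitions n. rlex_le lam (a # mu)} = Below \<union> Cons a ` Down"
  proof (intro set_eqI iffI)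
    fix lam assume lam: "lam \<in> {lam \<in> partitions n. rlex_le lam (a # mu)}"
    then obtain b lam' where lam_Cons: "lam = b # lam'"
      using a by (cases lam) (auto simp: Nil_in_partitions_iff)
    show "lam \<in> Below \<union> Cons a ` Down"
      using lam a unfolding lam_Cons Below_def Down_def
      by (auto simp: rlex_le_Cons_Cons Cons_in_partitions_iff)
  next
    fix lam assume "lam \<in> Below \<union> Cons a ` Down"
    then show "lam \<in> {lam \<in> partitions n. rlex_le lam (a # mu)}"
    proof
      assume lam: "lam \<in> Below"
      then obtain b lam' where lam_Cons: "lam = b # lam'"
        using a by (cases lam) (auto simp: Below_def Nil_in_partitions_iff)
      then show ?thesis
        using lam by (auto simp: Below_def rlex_le_Cons_Cons)
    next
      assume "lam \<in> Cons a ` Down"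
      then obtain nu where lam: "lam = a # nu" and nu: "nu \<in> partitions (n - a)" "rlex_le nu mu"
        by (auto simp: Down_def)
      have "\<forall>b\<in>set nu. b \<le> a"
        using rlex_le_parts_le[OF nu(2) _ a(3)] nu(1) by (simp add: partitions_def)
      with nu a show ?thesis
        unfolding lam by (simp add: Cons_in_partitions_iff rlex_le_Cons_Cons)
    qed
  qed
  have "psi N x (a # mu) = sum (psum_part N x) Below + sum (psum_part N x) (Cons a ` Down)"
    unfolding psi_altdef n split
    by (rule sum.union_disjoint) (auto simp: Below_def Down_def finite_partitions)
  also have "sum (psum_part N x) (Cons a ` Down) = psum N x a * psi N x mu"
    by (simp add: sum.reindex psum_part_def sum_distrib_left psi_altdef mu_sum Down_def)
  finally show ?thesis
    by (simp add: Below_def)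
qed

lemma sorted_wrt_replicate: "R a a \<Longrightarrow> sorted_wrt R (replicate n a)"
  by (induction n) auto

lemma twos_ones_in_partitions: "replicate j 2 @ replicate b 1 \<in> partitions (2 * j + b)"
  by (auto simp: partitions_def sorted_wrt_append sum_list_replicate sorted_wrt_replicate)

lemma partitions_parts_less_2: "{lam \<in> partitions n. \<forall>b\<in>set lam. b < 2} = {replicate n 1}"
proof -
  have ones: "replicate n 1 \<in> partitions n"
    using twos_ones_in_partitions[of 0 n] by simp
  show ?thesis
  proof (intro equalityI subsetI)
    fix lam assume "lam \<in> {lam \<in> partitions n. \<forall>b\<in>set lam. b < 2}"
    then have "lam = replicate n 1"
      by (intro partition_parts_le_1) auto
    then show "lam \<in> {replicate n 1}"
      by simp
  qed (use ones in auto)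
qed

lemma psi_ones: "psi N x (replicate b 1) = psum N x 1 ^ b"
proof -
  have ones: "replicate b 1 \<in> partitions b"
    using twos_ones_in_partitions[of 0 b] by simp
  have "{lam \<in> partitions b. rlex_le lam (replicate b 1)} = {replicate b 1}"
  proof (intro equalityI subsetI)
    fix lam assume "lam \<in> {lam \<in> partitions b. rlex_le lam (replicate b 1)}"
    then have "lam = replicate b 1"
      by (blast intro: rlex_le_antisym replicate_one_rlex_le)
    then show "lam \<in> {replicate b 1}"
      by simp
  qed (use ones in \<open>simp add: rlex_le_def\<close>)
  then show ?thesis
    by (simp add: psi_altdef sum_list_replicate psum_part_def)
qed

lemma psi_twos_ones:
  "psi N x (replicate j 2 @ replicate b 1) =
     psum N x 1 ^ b * (\<Sum>i\<le>j. psum N x 2 ^ i * psum N x 1 ^ (2 * (j - i)))"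
proof (induction j)
  case 0
  show ?case
    using psi_ones[of N x b] by simp
next
  case (Suc j)
  let ?p1 = "psum N x 1" and ?p2 = "psum N x 2"
  have "psi N x (replicate (Suc j) 2 @ replicate b 1) =
      ?p1 ^ (2 * Suc j + b) + ?p2 * psi N x (replicate j 2 @ replicate b 1)"
    using psi_Cons[OF twos_ones_in_partitions[of "Suc j" b, simplified]]
    by (simp add: partitions_parts_less_2 psum_part_def)
  also have "\<dots> = ?p1 ^ b * (?p1 ^ (2 * Suc j) + (\<Sum>i\<le>j. ?p2 ^ Suc i * ?p1 ^ (2 * (j - i))))"
    unfolding Suc.IH by (simp add: sum_distrib_left power_add algebra_simps)
  also have "\<dots> = ?p1 ^ b * (\<Sum>i\<le>Suc j. ?p2 ^ i * ?p1 ^ (2 * (Suc j - i)))"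
    by (simp only: sum.atMost_Suc_shift) simp
  finally show ?case .
qed

lemma psi_twos: "psi N x (replicate j 2) = (\<Sum>i\<le>j. psum N x 2 ^ i * psum N x 1 ^ (2 * (j - i)))"
  using psi_twos_ones[of N x j 0] by simp

lemma psi_twos_ones_eq_psi_twos:
  "psi N x (replicate j 2 @ replicate b 1) = psum N x 1 ^ b * psi N x (replicate j 2)"
  by (simp only: psi_twos_ones psi_twos)

lemma parts_le_2_rlex_le_twos_ones:
  assumes "lam \<in> partitions (2 * j + b)" and "b \<le> 1" and "\<forall>c\<in>set lam. c \<le> 2"
  shows "rlex_le lam (replicate j 2 @ replicate b 1)"
  using assms
proof (induction j arbitrary: lam)
  case 0
  then have "\<forall>c\<in>set lam. c \<le> 1"
    using member_le_sum_list[of _ lam] by (fastforce simp: partitions_def)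
  then show ?case
    using partition_parts_le_1 0 by (simp add: rlex_le_def)
next
  case (Suc j)
  then obtain c lam' where lam: "lam = c # lam'"
    by (cases lam) (auto simp: Nil_in_partitions_iff)
  with Suc.prems have c: "0 < c" "c \<le> 2" and lam': "lam' \<in> partitions (2 * Suc j + b - c)"
    and "\<forall>d\<in>set lam'. d \<le> c"
    by (auto simp: Cons_in_partitions_iff)
  show ?case
  proof (cases "c = 1")
    case True
    with Suc.prems lam \<open>\<forall>d\<in>set lam'. d \<le> c\<close> have "lam = replicate (2 * Suc j + b) 1"
      by (intro partition_parts_le_1) auto
    then show ?thesis
      using replicate_one_rlex_le[OF twos_ones_in_partitions, of "Suc j" b] by simp
  next
    case False
    with c have "c = 2"
      by linarith
    with lam' Suc.prems lam have "rlex_le lam' (replicate j 2 @ replicate b 1)"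
      by (intro Suc.IH) auto
    with \<open>c = 2\<close> show ?thesis
      unfolding lam by (simp add: rlex_le_Cons_Cons)
  qed
qed

lemma sum_partitions_parts_less_3:
  "(\<Sum>lam\<in>{lam \<in> partitions n. \<forall>b\<in>set lam. b < 3}. psum_part N x lam) =
     psum N x 1 ^ (n mod 2) * psi N x (replicate (n div 2) 2)"
proof -
  let ?top = "replicate (n div 2) 2 @ replicate (n mod 2) 1"
  have top: "?top \<in> partitions n"
    using twos_ones_in_partitions[of "n div 2" "n mod 2"] by simp
  have "{lam \<in> partitions n. \<forall>b\<in>set lam. b < 3} = {lam \<in> partitions n. rlex_le lam ?top}"
  proof (intro Collect_cong conj_cong refl iffI)
    fix lam assume "lam \<in> partitions n" "\<forall>b\<in>set lam. b < 3"
    then show "rlex_le lam ?top"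
      by (intro parts_le_2_rlex_le_twos_ones) auto
  next
    fix lam assume "lam \<in> partitions n" "rlex_le lam ?top"
    then have "\<forall>b\<in>set lam. b \<le> 2"
      by (intro rlex_le_parts_le[of lam ?top]) (auto simp: partitions_def)
    then show "\<forall>b\<in>set lam. b < 3"
      by auto
  qed
  moreover have "sum_list ?top = n"
    using top by (simp add: partitions_def)
  ultimately have "(\<Sum>lam\<in>{lam \<in> partitions n. \<forall>b\<in>set lam. b < 3}. psum_part N x lam) = psi N x ?top"
    by (simp only: psi_altdef)
  also have "\<dots> = psum N x 1 ^ (n mod 2) * psi N x (replicate (n div 2) 2)"
    by (rule psi_twos_ones_eq_psi_twos)
  finally show ?thesis .
qed

section \<open>Symmetric functions of degree at most 3\<close>

lemma psum_0: "psum 0 x i = 0"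
  by (simp add: psum_def)

lemma psum_Suc: "psum (Suc N) x i = psum N x i + x N ^ i"
  by (simp add: psum_def)

definition exponent_vectors :: "nat \<Rightarrow> nat \<Rightarrow> (nat \<Rightarrow> nat) set" where
  "exponent_vectors N d = {\<alpha>. (\<forall>j. N \<le> j \<longrightarrow> \<alpha> j = 0) \<and> (\<Sum>j<N. \<alpha> j) = d}"

lemma hsym_altdef: "hsym N x d = (\<Sum>\<alpha>\<in>exponent_vectors N d. \<Prod>j<N. x j ^ \<alpha> j)"
  unfolding hsym_def exponent_vectors_def ..

lemma finite_exponent_vectors: "finite (exponent_vectors N d)"
proof (rule finite_subset)
  show "exponent_vectors N d \<subseteq> {\<alpha>. \<forall>j. (j \<in> {..<N} \<longrightarrow> \<alpha> j \<in> {..d}) \<and> (j \<notin> {..<N} \<longrightarrow> \<alpha> j = 0)}"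
    unfolding exponent_vectors_def
    by (auto intro: order.trans[OF member_le_sum[of _ "{..<N}"]])
qed (intro finite_set_of_finite_funs; simp)

lemma hsym_Suc: "hsym (Suc N) x d = (\<Sum>a\<le>d. x N ^ a * hsym N x (d - a))"
proof -
  let ?E = "exponent_vectors"
  have "hsym (Suc N) x d = (\<Sum>(a, \<beta>)\<in>Sigma {..d} (\<lambda>a. ?E N (d - a)). x N ^ a * (\<Prod>j<N. x j ^ \<beta> j))"
    unfolding hsym_altdef
  proof (rule sum.reindex_bij_witness[where i = "\<lambda>(a, \<beta>). \<beta>(N := a)" and j = "\<lambda>\<alpha>. (\<alpha> N, \<alpha>(N := 0))"])
    fix \<alpha> assume \<alpha>: "\<alpha> \<in> ?E (Suc N) d"
    then have "(\<Sum>j<N. \<alpha> j) + \<alpha> N = d"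
      by (simp add: exponent_vectors_def)
    moreover have "(\<Sum>j<N. (\<alpha>(N := 0)) j) = (\<Sum>j<N. \<alpha> j)"
      by (intro sum.cong) auto
    ultimately show "(\<alpha> N, \<alpha>(N := 0)) \<in> Sigma {..d} (\<lambda>a. ?E N (d - a))"
      using \<alpha> by (auto simp: exponent_vectors_def)
    have "(\<Prod>j<N. x j ^ (\<alpha>(N := 0)) j) = (\<Prod>j<N. x j ^ \<alpha> j)"
      by (intro prod.cong) auto
    then show "(case (\<alpha> N, \<alpha>(N := 0)) of (a, \<beta>) \<Rightarrow> x N ^ a * (\<Prod>j<N. x j ^ \<beta> j)) =
        (\<Prod>j<Suc N. x j ^ \<alpha> j)"
      by (simp add: mult.commute)
  next
    fix p assume "p \<in> Sigma {..d} (\<lambda>a. ?E N (d - a))"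
    then obtain a \<beta> where p: "p = (a, \<beta>)" "a \<le> d" "\<beta> \<in> ?E N (d - a)"
      by auto
    then have "\<beta> N = 0"
      by (simp add: exponent_vectors_def)
    then show "(\<lambda>\<alpha>. (\<alpha> N, \<alpha>(N := 0))) ((\<lambda>(a, \<beta>). \<beta>(N := a)) p) = p"
      using p by auto
    have "(\<Sum>j<N. (\<beta>(N := a)) j) = (\<Sum>j<N. \<beta> j)"
      by (intro sum.cong) auto
    with p show "(\<lambda>(a, \<beta>). \<beta>(N := a)) p \<in> ?E (Suc N) d"
      by (auto simp: exponent_vectors_def)
  qed auto
  also have "\<dots> = (\<Sum>a\<le>d. x N ^ a * hsym N x (d - a))"
    by (simp add: sum.Sigma[symmetric] finite_exponent_vectors hsym_altdef sum_distrib_left)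
  finally show ?thesis .
qed

lemma esym_Suc: "esym (Suc N) x (Suc d) = esym N x (Suc d) + x N * esym N x d"
proof -
  let ?C = "\<lambda>N d. {S. S \<subseteq> {..<N} \<and> card S = d}"
  let ?e = "\<lambda>S. \<Prod>j\<in>S. x j"
  have fin: "finite (?C (Suc N) (Suc d))"
    by (rule finite_subset[of _ "Pow {..<Suc N}"]) auto
  have without_N: "?C (Suc N) (Suc d) - {S. N \<in> S} = ?C N (Suc d)"
    by (auto simp: less_Suc_eq)
  have "sum ?e (?C (Suc N) (Suc d) \<inter> {S. N \<in> S}) = (\<Sum>S\<in>?C N d. x N * ?e S)"
  proof (rule sum.reindex_bij_witness[where i = "insert N" and j = "\<lambda>S. S - {N}"])
    fix S assume S: "S \<in> ?C N d"
    then have "finite S" and "N \<notin> S"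
      using finite_subset by auto
    with S show "insert N S - {N} = S" and "insert N S \<in> ?C (Suc N) (Suc d) \<inter> {S. N \<in> S}"
      by auto
  next
    fix S assume S: "S \<in> ?C (Suc N) (Suc d) \<inter> {S. N \<in> S}"
    then have "finite S"
      using finite_subset by auto
    with S show "insert N (S - {N}) = S" and "S - {N} \<in> ?C N d"
      by (auto simp: less_Suc_eq)
    from S \<open>finite S\<close> show "x N * ?e (S - {N}) = ?e S"
      by (simp add: prod.remove[of S N])
  qed
  then show ?thesis
    unfolding esym_def sum.Int_Diff[OF fin, of _ "{S. N \<in> S}"] without_N
    by (simp add: sum_distrib_left)
qed

lemma hsym_0: "hsym 0 x d = (if d = 0 then 1 else 0)"
proof -
  have "exponent_vectors 0 d = (if d = 0 then {\<lambda>_. 0} else {})"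
    by (auto simp: exponent_vectors_def)
  then show ?thesis
    by (simp add: hsym_altdef)
qed

lemma hsym_0_right: "hsym N x 0 = 1"
  by (induction N) (simp_all add: hsym_0 hsym_Suc)

lemma hsym_1_psum: "hsym N x 1 = psum N x 1"
  by (induction N) (simp_all add: hsym_0 hsym_Suc hsym_0_right psum_0 psum_Suc)

lemma hsym_2_psum: "2 * hsym N x 2 = psum N x 1 ^ 2 + psum N x 2"
proof (induction N)
  case 0
  then show ?case by (simp add: hsym_0 psum_0)
next
  case (Suc N)
  have "hsym (Suc N) x 2 = hsym N x 2 + x N * hsym N x 1 + x N ^ 2"
    by (simp add: hsym_Suc numeral_2_eq_2 hsym_0_right)
  with Suc.IH show ?case
    unfolding hsym_1_psum by (simp add: psum_Suc algebra_simps power2_eq_square)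
qed

lemma hsym_3_psum: "6 * hsym N x 3 = psum N x 1 ^ 3 + 3 * psum N x 1 * psum N x 2 + 2 * psum N x 3"
proof (induction N)
  case 0
  then show ?case by (simp add: hsym_0 psum_0)
next
  case (Suc N)
  have "hsym (Suc N) x 3 = hsym N x 3 + x N * hsym N x 2 + x N ^ 2 * hsym N x 1 + x N ^ 3"
    by (simp add: hsym_Suc numeral_3_eq_3 numeral_2_eq_2 hsym_0_right)
  then have "6 * hsym (Suc N) x 3 =
      6 * hsym N x 3 + 3 * x N * (2 * hsym N x 2) + 6 * x N ^ 2 * hsym N x 1 + 6 * x N ^ 3"
    by (simp add: algebra_simps)
  with Suc.IH show ?case
    unfolding hsym_2_psum hsym_1_psum psum_Suc
    by (simp add: algebra_simps power2_eq_square power3_eq_cube)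
qed

lemma esym_0_right: "esym N x 0 = 1"
proof -
  have "{S. S \<subseteq> {..<N} \<and> card S = 0} = {{}}"
    by (auto dest: finite_subset)
  then show ?thesis
    by (simp add: esym_def)
qed

lemma esym_0: "0 < d \<Longrightarrow> esym 0 x d = 0"
  by (simp add: esym_def)

lemma esym_1_psum: "esym N x 1 = psum N x 1"
  by (induction N) (simp_all add: esym_0 esym_Suc[of _ x 0, simplified] esym_0_right psum_0 psum_Suc)

lemma esym_2_psum: "2 * esym N x 2 = psum N x 1 ^ 2 - psum N x 2"
proof (induction N)
  case 0
  then show ?case by (simp add: esym_0 psum_0)
next
  case (Suc N)
  have "esym (Suc N) x 2 = esym N x 2 + x N * esym N x 1"
    using esym_Suc[of N x 1] by (simp add: numeral_2_eq_2)
  with Suc.IH show ?case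
    unfolding esym_1_psum by (simp add: psum_Suc algebra_simps power2_eq_square)
qed

lemma esym_3_psum: "6 * esym N x 3 = psum N x 1 ^ 3 - 3 * psum N x 1 * psum N x 2 + 2 * psum N x 3"
proof (induction N)
  case 0
  then show ?case by (simp add: esym_0 psum_0)
next
  case (Suc N)
  have "esym (Suc N) x 3 = esym N x 3 + x N * esym N x 2"
    using esym_Suc[of N x 2] by (simp add: numeral_3_eq_3 numeral_2_eq_2)
  then have "6 * esym (Suc N) x 3 = 6 * esym N x 3 + 3 * x N * (2 * esym N x 2)"
    by (simp add: algebra_simps)
  with Suc.IH show ?case
    unfolding esym_2_psum psum_Suc
    by (simp add: algebra_simps power2_eq_square power3_eq_cube)
qed

lemma psum_3_eq: "psum N x 3 = 2 * hsym N x 3 + esym N x 3 - hsym N x 2 * psum N x 1"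
proof -
  have "6 * psum N x 3 = 2 * (6 * hsym N x 3) + 6 * esym N x 3 - 3 * (2 * hsym N x 2) * psum N x 1"
    unfolding hsym_3_psum esym_3_psum hsym_2_psum
    by (simp add: algebra_simps power2_eq_square power3_eq_cube)
  then show ?thesis
    by simp
qed

theorem proposition3p4:
  fixes k r N :: nat and x :: "nat \<Rightarrow> real"
  assumes "k \<ge> 1" and "r \<ge> 1"
  defines "m \<equiv> (r + 1) div 2"
  shows "psi N x (3 # replicate k 2 @ replicate r 1) =
    (if odd r then
       (psi N x (replicate (m + k + 1) 2)
          - hsym N x 2 * psum N x 1 ^ (r + 1) * psi N x (replicate k 2))
       + psum N x 1 ^ r * (2 * hsym N x 3 + esym N x 3) * psi N x (replicate k 2)
     else
       psum N x 1 * (psi N x (replicate (m + k + 1) 2)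
          - hsym N x 2 * psum N x 1 ^ r * psi N x (replicate k 2))
       + psum N x 1 ^ r * (2 * hsym N x 3 + esym N x 3) * psi N x (replicate k 2))"
proof -
  define n where "n = 2 * k + r + 3"
  have "3 # replicate k 2 @ replicate r 1 \<in> partitions n"
    using twos_ones_in_partitions[of k r] by (auto simp: n_def Cons_in_partitions_iff)
  then have "psi N x (3 # replicate k 2 @ replicate r 1) =
      psum N x 1 ^ (n mod 2) * psi N x (replicate (n div 2) 2)
      + psum N x 3 * (psum N x 1 ^ r * psi N x (replicate k 2))"
    by (simp only: psi_Cons sum_partitions_parts_less_3 psi_twos_ones_eq_psi_twos)
  moreover have "n div 2 = m + k + 1" and "n mod 2 = (if odd r then 0 else 1)"
    unfolding n_def m_def by presburger+
  ultimately show ?thesis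
    unfolding psum_3_eq by (simp add: algebra_simps)
qed

end
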